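(* Let $G\subseteq\mathrm{O}_n(\mathbb{R})$ be a finite group with fundamental invariants $\pi_1,\dots,\pi_m$, Hilbert map $\Pi=(\pi_1,\dots,\pi_m)$ and matrix $M_\Pi=(\langle d\pi_i,d\pi_j\rangle)_{1\le i,j\le m}$. The following are equivalent: (i) $\Pi(\mathbb{R}^n)=\{z\in V_{\mathbb{R}}(I_\Pi) \mid \phi_z(M_\Pi)\text{ is positive semi-definite}\}$. (ii) For every ring homomorphism $\phi:\mathbb{R}[\underline{X}]^G\to\mathbb{R}$: $\phi$ extends to a ring homomorphism $\tilde\phi:\mathbb{R}[\underline{X}]\to\mathbb{R}$ if and only if $\phi(\langle df,df\rangle)\ge0$ for all $f\in\mathbb{R}[\underline{X}]^G$.
   Context: $\mathbb{R}[\underline{X}]=\mathbb{R}[X_1,\dots,X_n]$ and $\mathbb{R}[\underline{X}]^G=\mathbb{R}[\pi_1,\dots,\pi_m]$. For polynomials $p,q$, $\langle dp,dq\rangle=\sum_{j=1}^n\frac{\partial p}{\partial X_j}\frac{\partial q}{\partial X_j}$; for $G$-invariant $p,q$ this is $G$-invariant, so $M_\Pi$ has entries in $\mathbb{R}[\underline{X}]^G$. $I_\Pi$ is the ideal of relations among $\pi_1,\dots,\pi_m$, $V_{\mathbb{R}}(I_\Pi)\subseteq\mathbb{R}^m$ its real zero set, and for $z\in V_{\mathbb{R}}(I_\Pi)$, $\phi_z:\mathbb{R}[\underline{X}]^G\to\mathbb{R}$ is $g(\pi_1,\dots,\pi_m)\mapsto g(z)$, applied entrywise to matrices. *)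

theory Defs
  imports "HOL-Analysis.Analysis"
begin

text \<open>With C the coordinate functions this is the ring of polynomial functions, which
  (since R is infinite) is isomorphic to the polynomial ring.\<close>
inductive_set alg_gen :: "('a \<Rightarrow> real) set \<Rightarrow> ('a \<Rightarrow> real) set"
  for C :: "('a \<Rightarrow> real) set" where
  const: "(\<lambda>x. c) \<in> alg_gen C"
| gen: "f \<in> C \<Longrightarrow> f \<in> alg_gen C"
| add: "f \<in> alg_gen C \<Longrightarrow> g \<in> alg_gen C \<Longrightarrow> (\<lambda>x. f x + g x) \<in> alg_gen C"
| mult: "f \<in> alg_gen C \<Longrightarrow> g \<in> alg_gen C \<Longrightarrow> (\<lambda>x. f x * g x) \<in> alg_gen C"

definition polys :: "(real^'n \<Rightarrow> real) set" where
  "polys = alg_gen (range (\<lambda>i x. x $ i))"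

definition finite_orth_group :: "(real^'n^'n) set \<Rightarrow> bool" where
  "finite_orth_group G \<longleftrightarrow> finite G \<and> mat 1 \<in> G
     \<and> (\<forall>A\<in>G. \<forall>B\<in>G. A ** B \<in> G) \<and> (\<forall>A\<in>G. matrix_inv A \<in> G)
     \<and> (\<forall>A\<in>G. orthogonal_matrix A)"

definition inv_polys :: "(real^'n^'n) set \<Rightarrow> (real^'n \<Rightarrow> real) set" where
  "inv_polys G = {p \<in> polys. \<forall>A\<in>G. \<forall>x. p (A *v x) = p x}"

definition pderiv_fun :: "(real^'n \<Rightarrow> real) \<Rightarrow> 'n \<Rightarrow> real^'n \<Rightarrow> real" where
  "pderiv_fun p j x = deriv (\<lambda>t. p (x + t *\<^sub>R axis j 1)) 0"

definition dpair :: "(real^'n \<Rightarrow> real) \<Rightarrow> (real^'n \<Rightarrow> real) \<Rightarrow> real^'n \<Rightarrow> real" where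
  "dpair p q x = (\<Sum>j\<in>UNIV. pderiv_fun p j x * pderiv_fun q j x)"

definition homogeneous_fun :: "(real^'n \<Rightarrow> real) \<Rightarrow> bool" where
  "homogeneous_fun p \<longleftrightarrow> (\<exists>d::nat. d > 0 \<and> (\<forall>t x. p (t *\<^sub>R x) = t ^ d * p x))"

definition fundamental_invariants ::
    "(real^'n^'n) set \<Rightarrow> ('m::finite \<Rightarrow> real^'n \<Rightarrow> real) \<Rightarrow> bool" where
  "fundamental_invariants G \<pi> \<longleftrightarrow>
     (\<forall>i. \<pi> i \<in> inv_polys G \<and> homogeneous_fun (\<pi> i))
   \<and> inv_polys G = alg_gen (range \<pi>)
   \<and> (\<forall>i. \<pi> i \<notin> alg_gen (\<pi> ` (UNIV - {i})))"

definition hilbert_map :: "('m \<Rightarrow> real^'n \<Rightarrow> real) \<Rightarrow> real^'n \<Rightarrow> real^'m" where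
  "hilbert_map \<pi> x = (\<chi> i. \<pi> i x)"

definition relation_ideal :: "('m::finite \<Rightarrow> real^'n \<Rightarrow> real) \<Rightarrow> (real^'m \<Rightarrow> real) set" where
  "relation_ideal \<pi> = {g \<in> polys. \<forall>x. g (hilbert_map \<pi> x) = 0}"

definition real_zero_set :: "('a \<Rightarrow> real) set \<Rightarrow> 'a set" where
  "real_zero_set I = {z. \<forall>g\<in>I. g z = 0}"

definition phi_z :: "('m::finite \<Rightarrow> real^'n \<Rightarrow> real) \<Rightarrow> real^'m \<Rightarrow> (real^'n \<Rightarrow> real) \<Rightarrow> real" where
  "phi_z \<pi> z f = (SOME c. \<exists>g\<in>polys. (\<forall>x. f x = g (hilbert_map \<pi> x)) \<and> c = g z)"

definition M_Pi :: "('m \<Rightarrow> real^'n \<Rightarrow> real) \<Rightarrow> (real^'n \<Rightarrow> real)^'m^'m" where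
  "M_Pi \<pi> = (\<chi> i j. dpair (\<pi> i) (\<pi> j))"

definition psd :: "real^'m^'m \<Rightarrow> bool" where
  "psd A \<longleftrightarrow> (\<forall>v. 0 \<le> v \<bullet> (A *v v))"

definition ring_hom_on :: "('a \<Rightarrow> real) set \<Rightarrow> (('a \<Rightarrow> real) \<Rightarrow> real) \<Rightarrow> bool" where
  "ring_hom_on R \<phi> \<longleftrightarrow> \<phi> (\<lambda>x. 1) = 1
     \<and> (\<forall>f\<in>R. \<forall>g\<in>R. \<phi> (\<lambda>x. f x + g x) = \<phi> f + \<phi> g)
     \<and> (\<forall>f\<in>R. \<forall>g\<in>R. \<phi> (\<lambda>x. f x * g x) = \<phi> f * \<phi> g)"

end

theory Submission
  imports Defs
begin

text \<open>Both conditions are statements about points of the real zero set of the relation ideal.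
  A ring homomorphism \<phi> on R[X]^G = R[pi_1, ..., pi_m] is determined by z = (\<phi>(pi_i))_i, these
  points range exactly over that zero set, and \<phi> = phi_z \<pi> z. Since R has no ring endomorphisms
  besides the identity, a ring homomorphism on R[X] is evaluation at a point, so \<phi> extends iff
  z lies in the image of the Hilbert map. Since G is orthogonal, the entries of M_Pi are invariant,
  and by the chain rule \<phi>(<d(g o \<Pi>), d(g o \<Pi>)>) is the quadratic form of phi_z(M_Pi) evaluated
  at the gradient of g at z; taking g linear yields every vector, so \<phi>(<df, df>) \<ge> 0 for all
  invariants f iff phi_z(M_Pi) is positive semi-definite. Thus (ii) states pointwise on the zero
  set what (i) states as an equality of sets.\<close>

lemma real_ring_endo_mono:
  fixes h :: "real \<Rightarrow> real"
  assumes add: "\<And>a b. h (a + b) = h a + h b" and mult: "\<And>a b. h (a * b) = h a * h b"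
    and "a \<le> b"
  shows "h a \<le> h b"
proof -
  have "b - a = sqrt (b - a) * sqrt (b - a)"
    using \<open>a \<le> b\<close> by simp
  then have "h (b - a) = h (sqrt (b - a)) * h (sqrt (b - a))"
    by (metis mult)
  moreover have "h b = h (b - a) + h a"
    using add[of "b - a" a] by simp
  ultimately show ?thesis
    by (simp add: add_increasing)
qed

lemma real_ring_endo_fixes_Rats:
  fixes h :: "real \<Rightarrow> real"
  assumes add: "\<And>a b. h (a + b) = h a + h b" and mult: "\<And>a b. h (a * b) = h a * h b"
    and one: "h 1 = 1" and "r \<in> \<rat>"
  shows "h r = r"
proof -
  have zero: "h 0 = 0"
    using add[of 0 0] by simp
  then have neg: "h (- a) = - h a" for a
    using add[of a "- a"] by simp
  have "h (of_nat k) = of_nat k" for k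
    by (induction k) (simp_all add: zero add one)
  then have int: "h (of_int k) = of_int k" for k
    by (cases k rule: int_cases2) (simp_all add: neg)
  obtain p q where "q > 0" and r: "r = of_int p / of_int q"
    using \<open>r \<in> \<rat>\<close> by (auto elim: Rats_cases')
  then have "h r * of_int q = r * of_int q"
    using mult[of r "of_int q"] int[of p] int[of q] by simp
  then show ?thesis
    using \<open>q > 0\<close> by simp
qed

lemma real_ring_endo_id:
  fixes h :: "real \<Rightarrow> real"
  assumes add: "\<And>a b. h (a + b) = h a + h b" and mult: "\<And>a b. h (a * b) = h a * h b"
    and one: "h 1 = 1"
  shows "h c = c"
proof (rule ccontr)
  assume "h c \<noteq> c"
  then consider "h c < c" | "c < h c" by linarith
  then show False
  proof cases
    case 1
    then obtain r where "r \<in> \<rat>" "h c < r" "r < c" using Rats_dense_in_real by blast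
    then show False
      using real_ring_endo_mono[OF add mult, of r c] real_ring_endo_fixes_Rats[OF add mult one] by simp
  next
    case 2
    then obtain r where "r \<in> \<rat>" "c < r" "r < h c" using Rats_dense_in_real by blast
    then show False
      using real_ring_endo_mono[OF add mult, of c r] real_ring_endo_fixes_Rats[OF add mult one] by simp
  qed
qed

lemma ring_hom_on_add:
  "ring_hom_on R \<psi> \<Longrightarrow> f \<in> R \<Longrightarrow> g \<in> R \<Longrightarrow> \<psi> (\<lambda>x. f x + g x) = \<psi> f + \<psi> g"
  unfolding ring_hom_on_def by blast

lemma ring_hom_on_mult:
  "ring_hom_on R \<psi> \<Longrightarrow> f \<in> R \<Longrightarrow> g \<in> R \<Longrightarrow> \<psi> (\<lambda>x. f x * g x) = \<psi> f * \<psi> g"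
  unfolding ring_hom_on_def by blast

text \<open>ring_hom_on asks only for additivity and multiplicativity; R-linearity comes for free
  because the identity is the only ring endomorphism of R.\<close>
lemma ring_hom_on_const:
  assumes "ring_hom_on (alg_gen C) \<psi>"
  shows "\<psi> (\<lambda>x. c) = c"
  using real_ring_endo_id[where h = "\<lambda>c. \<psi> (\<lambda>x. c)"]
    ring_hom_on_add[OF assms alg_gen.const alg_gen.const]
    ring_hom_on_mult[OF assms alg_gen.const alg_gen.const] assms
  unfolding ring_hom_on_def by blast

lemma alg_gen_sum:
  assumes "finite S" "\<And>i. i \<in> S \<Longrightarrow> f i \<in> alg_gen C"
  shows "(\<lambda>x. \<Sum>i\<in>S. f i x) \<in> alg_gen C"
  using assms by (induction S rule: finite_induct) (simp_all add: alg_gen.const alg_gen.add)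

lemma ring_hom_on_sum:
  assumes hom: "ring_hom_on (alg_gen C) \<psi>"
    and "finite S" "\<And>i. i \<in> S \<Longrightarrow> f i \<in> alg_gen C"
  shows "\<psi> (\<lambda>x. \<Sum>i\<in>S. f i x) = (\<Sum>i\<in>S. \<psi> (f i))"
  using assms(2,3)
proof (induction S rule: finite_induct)
  case empty
  then show ?case using ring_hom_on_const[OF hom] by simp
next
  case (insert a S)
  then show ?case
    using ring_hom_on_add[OF hom _ alg_gen_sum[of S f C]] by simp
qed

lemma alg_gen_compose:
  fixes c :: "'i::finite \<Rightarrow> 'a \<Rightarrow> real"
  assumes "g \<in> polys"
  shows "(\<lambda>x. g (\<chi> i. c i x)) \<in> alg_gen (range c)"
  using assms unfolding polys_def
  by induction (auto intro: alg_gen.intros)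

lemma ring_hom_on_compose:
  fixes c :: "'i::finite \<Rightarrow> 'a \<Rightarrow> real"
  assumes hom: "ring_hom_on (alg_gen (range c)) \<psi>" and "g \<in> polys"
  shows "\<psi> (\<lambda>x. g (\<chi> i. c i x)) = g (\<chi> i. \<psi> (c i))"
  using assms(2) unfolding polys_def
proof induction
  case (const d)
  then show ?case using ring_hom_on_const[OF hom] by simp
next
  case (gen f)
  then show ?case by auto
next
  case (add f g)
  then show ?case
    using ring_hom_on_add[OF hom alg_gen_compose alg_gen_compose] by (simp add: polys_def)
next
  case (mult f g)
  then show ?case
    using ring_hom_on_mult[OF hom alg_gen_compose alg_gen_compose] by (simp add: polys_def)
qed

lemma ring_hom_on_polys_eval:
  assumes "ring_hom_on polys \<psi>" and "p \<in> polys"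
  shows "\<psi> p = p (\<chi> j. \<psi> (\<lambda>x. x $ j))"
  using ring_hom_on_compose[of "\<lambda>j x. x $ j" \<psi> p] assms by (simp add: polys_def)

lemma alg_gen_range_eq_compose_polys:
  fixes \<pi> :: "'m::finite \<Rightarrow> real^'n \<Rightarrow> real"
  shows "alg_gen (range \<pi>) = (\<lambda>g x. g (hilbert_map \<pi> x)) ` polys"
proof
  show "(\<lambda>g x. g (hilbert_map \<pi> x)) ` polys \<subseteq> alg_gen (range \<pi>)"
    using alg_gen_compose[of _ \<pi>] by (auto simp: hilbert_map_def)
  show "alg_gen (range \<pi>) \<subseteq> (\<lambda>g x. g (hilbert_map \<pi> x)) ` polys"
  proof
    fix f assume "f \<in> alg_gen (range \<pi>)"
    then show "f \<in> (\<lambda>g x. g (hilbert_map \<pi> x)) ` polys"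
    proof induction
      case (const c)
      then show ?case
        by (intro image_eqI[where x = "\<lambda>z. c"]) (simp_all add: polys_def alg_gen.const)
    next
      case (gen f)
      then obtain i where "f = \<pi> i" by blast
      then show ?case
        by (intro image_eqI[where x = "\<lambda>z. z $ i"]) (simp_all add: hilbert_map_def polys_def alg_gen.gen)
    next
      case (add f g)
      then obtain a b where "a \<in> polys" "b \<in> polys"
        "f = (\<lambda>x. a (hilbert_map \<pi> x))" "g = (\<lambda>x. b (hilbert_map \<pi> x))" by blast
      then show ?case
        by (intro image_eqI[where x = "\<lambda>z. a z + b z"]) (simp_all add: polys_def alg_gen.add)
    next
      case (mult f g)
      then obtain a b where "a \<in> polys" "b \<in> polys"
        "f = (\<lambda>x. a (hilbert_map \<pi> x))" "g = (\<lambda>x. b (hilbert_map \<pi> x))" by blast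
      then show ?case
        by (intro image_eqI[where x = "\<lambda>z. a z * b z"]) (simp_all add: polys_def alg_gen.mult)
    qed
  qed
qed

definition grad :: "(real^'n \<Rightarrow> real) \<Rightarrow> real^'n \<Rightarrow> real^'n" where
  "grad p x = (\<chi> j. pderiv_fun p j x)"

lemma grad_eqI:
  assumes "(p has_derivative (\<lambda>h. v \<bullet> h)) (at x)"
  shows "grad p x = v"
proof -
  have "pderiv_fun p j x = v $ j" for j
  proof -
    have line: "((\<lambda>t. x + t *\<^sub>R axis j 1) has_derivative (\<lambda>t. t *\<^sub>R axis j 1)) (at 0)"
      by (auto intro!: derivative_eq_intros)
    have "(p has_derivative (\<lambda>h. v \<bullet> h)) (at (x + 0 *\<^sub>R axis j 1))"
      using assms by simp
    from has_derivative_compose[OF line this]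
    have "((\<lambda>t. p (x + t *\<^sub>R axis j 1)) has_derivative (\<lambda>t. v $ j * t)) (at 0)"
      by (simp add: inner_axis mult.commute)
    then show ?thesis
      unfolding pderiv_fun_def by (intro DERIV_imp_deriv) (simp add: has_field_derivative_def)
  qed
  then show ?thesis
    by (simp add: grad_def vec_eq_iff)
qed

lemma polys_has_derivative_polys:
  assumes "p \<in> polys"
  obtains D where "\<And>j. D j \<in> polys" and "\<And>x. (p has_derivative (\<lambda>h. (\<chi> j. D j x) \<bullet> h)) (at x)"
proof -
  have "p \<in> alg_gen (range (\<lambda>i x. x $ i))"
    using assms by (simp add: polys_def)
  then have "\<exists>D. (\<forall>j. D j \<in> polys) \<and> (\<forall>x. (p has_derivative (\<lambda>h. (\<chi> j. D j x) \<bullet> h)) (at x))"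
  proof induction
    case (const c)
    show ?case
      by (intro exI[where x = "\<lambda>j x. 0"]) (simp add: polys_def alg_gen.const zero_vec_def[symmetric])
  next
    case (gen f)
    then obtain i where "f = (\<lambda>x. x $ i)" by blast
    moreover have "((\<lambda>x. x $ i) has_derivative (\<lambda>h. axis i 1 \<bullet> h)) (at x)" for x
      using bounded_linear_imp_has_derivative[OF bounded_linear_vec_nth[of i]]
      by (simp add: inner_commute inner_axis)
    ultimately show ?case
      by (intro exI[where x = "\<lambda>j x. axis i 1 $ j"]) (simp add: polys_def alg_gen.const)
  next
    case (add f g)
    then obtain Df Dg where "\<forall>j. Df j \<in> polys" "\<forall>j. Dg j \<in> polys"
      "\<forall>x. (f has_derivative (\<lambda>h. (\<chi> j. Df j x) \<bullet> h)) (at x)"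
      "\<forall>x. (g has_derivative (\<lambda>h. (\<chi> j. Dg j x) \<bullet> h)) (at x)"
      by blast
    moreover have "(\<chi> j. Df j x + Dg j x) \<bullet> h = (\<chi> j. Df j x) \<bullet> h + (\<chi> j. Dg j x) \<bullet> h" for x h
      by (simp add: inner_vec_def sum.distrib algebra_simps)
    ultimately show ?case
      by (intro exI[where x = "\<lambda>j x. Df j x + Dg j x"])
        (simp add: has_derivative_add polys_def alg_gen.add)
  next
    case (mult f g)
    then obtain Df Dg where "\<forall>j. Df j \<in> polys" "\<forall>j. Dg j \<in> polys"
      "\<forall>x. (f has_derivative (\<lambda>h. (\<chi> j. Df j x) \<bullet> h)) (at x)"
      "\<forall>x. (g has_derivative (\<lambda>h. (\<chi> j. Dg j x) \<bullet> h)) (at x)"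
      by blast
    moreover have "(\<chi> j. f x * Dg j x + g x * Df j x) \<bullet> h
        = f x * ((\<chi> j. Dg j x) \<bullet> h) + ((\<chi> j. Df j x) \<bullet> h) * g x" for x h
      by (simp add: inner_vec_def sum.distrib sum_distrib_left sum_distrib_right algebra_simps)
    ultimately show ?case
      using mult.hyps
      by (intro exI[where x = "\<lambda>j x. f x * Dg j x + g x * Df j x"])
        (simp add: has_derivative_mult polys_def alg_gen.add alg_gen.mult)
  qed
  then show ?thesis
    using that by blast
qed

lemma has_derivative_grad:
  assumes "p \<in> polys"
  shows "(p has_derivative (\<lambda>h. grad p x \<bullet> h)) (at x)"
proof -
  obtain D where "\<And>x. (p has_derivative (\<lambda>h. (\<chi> j. D j x) \<bullet> h)) (at x)"
    using polys_has_derivative_polys[OF assms] by blast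
  then show ?thesis
    using grad_eqI by metis
qed

lemma pderiv_fun_polys:
  assumes "p \<in> polys"
  shows "pderiv_fun p j \<in> polys"
proof -
  obtain D where "\<And>j. D j \<in> polys" and "\<And>x. (p has_derivative (\<lambda>h. (\<chi> j. D j x) \<bullet> h)) (at x)"
    using polys_has_derivative_polys[OF assms] by blast
  then have "pderiv_fun p j = D j"
    using grad_eqI by (fastforce simp: grad_def vec_eq_iff)
  then show ?thesis
    using \<open>D j \<in> polys\<close> by simp
qed

lemma grad_nth: "grad p x $ j = pderiv_fun p j x"
  by (simp add: grad_def)

lemma dpair_eq_inner_grad: "dpair p q x = grad p x \<bullet> grad q x"
  by (simp add: dpair_def grad_def inner_vec_def)

lemma dpair_polys:
  assumes "f \<in> polys" "g \<in> polys"
  shows "dpair f g \<in> polys"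
  using pderiv_fun_polys[OF assms(1)] pderiv_fun_polys[OF assms(2)]
  unfolding dpair_def[abs_def] polys_def by (intro alg_gen_sum) (simp_all add: alg_gen.mult)

lemma inner_left_polys: "(\<lambda>z. v \<bullet> z) \<in> polys"
  unfolding inner_vec_def polys_def
  by (intro alg_gen_sum) (auto intro: alg_gen.mult[OF alg_gen.const alg_gen.gen])

lemma grad_inner_left: "grad (\<lambda>z. v \<bullet> z) x = v"
  by (intro grad_eqI bounded_linear_imp_has_derivative bounded_linear_inner_right)

lemma grad_invariant:
  assumes "p \<in> polys" and "\<And>x. p (A *v x) = p x"
  shows "grad p x = transpose A *v grad p (A *v x)"
proof (rule grad_eqI)
  have "((\<lambda>x. A *v x) has_derivative (\<lambda>h. A *v h)) (at x)"
    by (simp add: bounded_linear_imp_has_derivative)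
  from has_derivative_compose[OF this has_derivative_grad[OF assms(1)]]
  show "(p has_derivative (\<lambda>h. (transpose A *v grad p (A *v x)) \<bullet> h)) (at x)"
    by (simp add: assms(2) dot_lmul_matrix transpose_matrix_vector)
qed

lemma dpair_inv_polys:
  assumes orth: "\<And>A. A \<in> G \<Longrightarrow> orthogonal_matrix A"
    and f: "f \<in> inv_polys G" and g: "g \<in> inv_polys G"
  shows "dpair f g \<in> inv_polys G"
proof -
  have "dpair f g (A *v x) = dpair f g x" if "A \<in> G" for A x
  proof -
    let ?a = "grad f (A *v x)" and ?b = "grad g (A *v x)"
    have "grad f x = transpose A *v ?a" "grad g x = transpose A *v ?b"
      using f g that unfolding inv_polys_def by (blast intro: grad_invariant)+
    then have "dpair f g x = (transpose A *v ?a) \<bullet> (transpose A *v ?b)"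
      by (simp only: dpair_eq_inner_grad)
    also have "\<dots> = ?a \<bullet> (A *v (transpose A *v ?b))"
      by (simp only: transpose_matrix_vector dot_lmul_matrix)
    also have "\<dots> = ?a \<bullet> ?b"
      using orth[OF that] unfolding orthogonal_matrix_def
      by (simp only: matrix_vector_mul_assoc matrix_vector_mul_lid)
    finally show ?thesis
      by (simp only: dpair_eq_inner_grad)
  qed
  then show ?thesis
    using f g dpair_polys by (auto simp: inv_polys_def)
qed

lemma has_derivative_vec_lambda_at:
  fixes F :: "'a::real_normed_vector \<Rightarrow> real^'m"
  assumes "\<And>i. ((\<lambda>x. F x $ i) has_derivative (\<lambda>h. D h $ i)) (at x)"
  shows "(F has_derivative D) (at x)"
  using assms unfolding has_derivative_componentwise_within[of F D x UNIV]
  by (auto simp: Basis_vec_def inner_axis)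

lemma has_derivative_hilbert_map:
  assumes "\<And>i. \<pi> i \<in> polys"
  shows "(hilbert_map \<pi> has_derivative (\<lambda>h. \<chi> i. grad (\<pi> i) x \<bullet> h)) (at x)"
  using has_derivative_grad[OF assms] by (intro has_derivative_vec_lambda_at) (simp add: hilbert_map_def)

lemma grad_compose_hilbert_map:
  assumes "\<And>i. \<pi> i \<in> polys" and "g \<in> polys"
  shows "grad (\<lambda>x. g (hilbert_map \<pi> x)) x
    = (\<Sum>i\<in>UNIV. pderiv_fun g i (hilbert_map \<pi> x) *\<^sub>R grad (\<pi> i) x)"
proof (rule grad_eqI)
  have "(hilbert_map \<pi> has_derivative (\<lambda>h. \<chi> i. grad (\<pi> i) x \<bullet> h)) (at x)"
    using assms(1) by (rule has_derivative_hilbert_map)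
  from has_derivative_compose[OF this has_derivative_grad[OF assms(2)]]
  show "((\<lambda>x. g (hilbert_map \<pi> x)) has_derivative
      (\<lambda>h. (\<Sum>i\<in>UNIV. pderiv_fun g i (hilbert_map \<pi> x) *\<^sub>R grad (\<pi> i) x) \<bullet> h)) (at x)"
    by (simp add: inner_sum_left inner_vec_def[of "grad g (hilbert_map \<pi> x)"] grad_nth)
qed

lemma dpair_compose_hilbert_map:
  assumes "\<And>i. \<pi> i \<in> polys" and "g \<in> polys"
  defines "f \<equiv> \<lambda>x. g (hilbert_map \<pi> x)"
  shows "dpair f f x = (\<Sum>i\<in>UNIV. \<Sum>j\<in>UNIV. pderiv_fun g i (hilbert_map \<pi> x)
      * pderiv_fun g j (hilbert_map \<pi> x) * dpair (\<pi> i) (\<pi> j) x)"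
  unfolding f_def dpair_eq_inner_grad grad_compose_hilbert_map[OF assms(1,2)] inner_sum_left
  by (simp add: inner_sum_right sum_distrib_left mult_ac)

text \<open>The choice in phi_z is harmless on the real zero set: two representatives of the same
  invariant differ by an element of the relation ideal, which vanishes at z.\<close>
lemma phi_z_compose:
  fixes \<pi> :: "'m::finite \<Rightarrow> real^'n \<Rightarrow> real"
  assumes z: "z \<in> real_zero_set (relation_ideal \<pi>)" and g: "g \<in> polys"
  shows "phi_z \<pi> z (\<lambda>x. g (hilbert_map \<pi> x)) = g z"
  unfolding phi_z_def
proof (rule someI2)
  show "\<exists>g'\<in>polys. (\<forall>x. g (hilbert_map \<pi> x) = g' (hilbert_map \<pi> x)) \<and> g z = g' z"
    using g by blast
next
  fix c assume "\<exists>g'\<in>polys. (\<forall>x. g (hilbert_map \<pi> x) = g' (hilbert_map \<pi> x)) \<and> c = g' z"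
  then obtain g' where g': "g' \<in> polys" "\<forall>x. g (hilbert_map \<pi> x) = g' (hilbert_map \<pi> x)" "c = g' z"
    by blast
  have "(\<lambda>y. g' y + (- 1) * g y) \<in> polys"
    using g g'(1) unfolding polys_def by (intro alg_gen.add alg_gen.mult alg_gen.const)
  with g'(2) have "(\<lambda>y. g' y + (- 1) * g y) \<in> relation_ideal \<pi>"
    by (simp add: relation_ideal_def)
  moreover have "\<forall>h\<in>relation_ideal \<pi>. h z = 0"
    using z by (simp add: real_zero_set_def)
  ultimately have "g' z + (- 1) * g z = 0"
    by fastforce
  with g'(3) show "c = g z"
    by simp
qed

lemma ring_hom_on_point_in_zero_set:
  fixes \<pi> :: "'m::finite \<Rightarrow> real^'n \<Rightarrow> real"
  assumes hom: "ring_hom_on (alg_gen (range \<pi>)) \<phi>"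
  shows "(\<chi> i. \<phi> (\<pi> i)) \<in> real_zero_set (relation_ideal \<pi>)"
  unfolding real_zero_set_def
proof safe
  fix g assume "g \<in> relation_ideal \<pi>"
  then have "g \<in> polys" and "(\<lambda>x. g (hilbert_map \<pi> x)) = (\<lambda>x. 0)"
    by (auto simp: relation_ideal_def)
  then show "g (\<chi> i. \<phi> (\<pi> i)) = 0"
    using ring_hom_on_compose[OF hom, of g] ring_hom_on_const[OF hom, of 0]
    by (simp add: hilbert_map_def)
qed

lemma ring_hom_on_eq_phi_z:
  fixes \<pi> :: "'m::finite \<Rightarrow> real^'n \<Rightarrow> real"
  assumes hom: "ring_hom_on (alg_gen (range \<pi>)) \<phi>" and "f \<in> alg_gen (range \<pi>)"
  shows "\<phi> f = phi_z \<pi> (\<chi> i. \<phi> (\<pi> i)) f"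
proof -
  obtain g where "g \<in> polys" and f: "f = (\<lambda>x. g (hilbert_map \<pi> x))"
    using assms(2) by (auto simp: alg_gen_range_eq_compose_polys)
  then show ?thesis
    using ring_hom_on_compose[OF hom, of g] phi_z_compose[OF ring_hom_on_point_in_zero_set[OF hom]]
    by (simp add: hilbert_map_def)
qed

lemma ring_hom_on_phi_z:
  fixes \<pi> :: "'m::finite \<Rightarrow> real^'n \<Rightarrow> real"
  assumes z: "z \<in> real_zero_set (relation_ideal \<pi>)"
  shows "ring_hom_on (alg_gen (range \<pi>)) (phi_z \<pi> z)"
  unfolding ring_hom_on_def alg_gen_range_eq_compose_polys
proof safe
  show "phi_z \<pi> z (\<lambda>x. 1) = 1"
    using phi_z_compose[OF z, of "\<lambda>z. 1"] by (simp add: polys_def alg_gen.const)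
  fix a b :: "real^'m \<Rightarrow> real" assume "a \<in> polys" "b \<in> polys"
  then have "(\<lambda>y. a y + b y) \<in> polys" "(\<lambda>y. a y * b y) \<in> polys"
    by (simp_all add: polys_def alg_gen.add alg_gen.mult)
  with \<open>a \<in> polys\<close> \<open>b \<in> polys\<close> show
    "phi_z \<pi> z (\<lambda>x. a (hilbert_map \<pi> x) + b (hilbert_map \<pi> x))
       = phi_z \<pi> z (\<lambda>x. a (hilbert_map \<pi> x)) + phi_z \<pi> z (\<lambda>x. b (hilbert_map \<pi> x))"
    "phi_z \<pi> z (\<lambda>x. a (hilbert_map \<pi> x) * b (hilbert_map \<pi> x))
       = phi_z \<pi> z (\<lambda>x. a (hilbert_map \<pi> x)) * phi_z \<pi> z (\<lambda>x. b (hilbert_map \<pi> x))"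
    using phi_z_compose[OF z] by simp_all
qed

lemma phi_z_gen:
  fixes \<pi> :: "'m::finite \<Rightarrow> real^'n \<Rightarrow> real"
  assumes "z \<in> real_zero_set (relation_ideal \<pi>)"
  shows "phi_z \<pi> z (\<pi> i) = z $ i"
  using phi_z_compose[OF assms, of "\<lambda>z. z $ i"] by (simp add: hilbert_map_def polys_def alg_gen.gen)

lemma ring_hom_on_points_eq_zero_set:
  fixes \<pi> :: "'m::finite \<Rightarrow> real^'n \<Rightarrow> real"
  shows "(\<lambda>\<phi>. \<chi> i. \<phi> (\<pi> i)) ` {\<phi>. ring_hom_on (alg_gen (range \<pi>)) \<phi>}
    = real_zero_set (relation_ideal \<pi>)"
proof
  show "(\<lambda>\<phi>. \<chi> i. \<phi> (\<pi> i)) ` {\<phi>. ring_hom_on (alg_gen (range \<pi>)) \<phi>} \<subseteq> real_zero_set (relation_ideal \<pi>)"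
    using ring_hom_on_point_in_zero_set by blast
  show "real_zero_set (relation_ideal \<pi>) \<subseteq> (\<lambda>\<phi>. \<chi> i. \<phi> (\<pi> i)) ` {\<phi>. ring_hom_on (alg_gen (range \<pi>)) \<phi>}"
  proof
    fix z assume z: "z \<in> real_zero_set (relation_ideal \<pi>)"
    then have "z = (\<chi> i. phi_z \<pi> z (\<pi> i))"
      by (simp add: phi_z_gen vec_eq_iff)
    with ring_hom_on_phi_z[OF z] show "z \<in> (\<lambda>\<phi>. \<chi> i. \<phi> (\<pi> i)) ` {\<phi>. ring_hom_on (alg_gen (range \<pi>)) \<phi>}"
      by blast
  qed
qed

lemma ring_hom_on_extends_iff:
  fixes \<pi> :: "'m::finite \<Rightarrow> real^'n \<Rightarrow> real"
  assumes hom: "ring_hom_on (alg_gen (range \<pi>)) \<phi>" and sub: "alg_gen (range \<pi>) \<subseteq> polys"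
  shows "(\<exists>\<psi>. ring_hom_on polys \<psi> \<and> (\<forall>f\<in>alg_gen (range \<pi>). \<psi> f = \<phi> f))
     \<longleftrightarrow> (\<chi> i. \<phi> (\<pi> i)) \<in> range (hilbert_map \<pi>)"
proof
  assume "\<exists>\<psi>. ring_hom_on polys \<psi> \<and> (\<forall>f\<in>alg_gen (range \<pi>). \<psi> f = \<phi> f)"
  then obtain \<psi> where \<psi>: "ring_hom_on polys \<psi>" "\<forall>f\<in>alg_gen (range \<pi>). \<psi> f = \<phi> f"
    by blast
  have "\<phi> (\<pi> i) = \<pi> i (\<chi> j. \<psi> (\<lambda>x. x $ j))" for i
  proof -
    have "\<pi> i \<in> alg_gen (range \<pi>)"
      by (simp add: alg_gen.gen)
    then have "\<phi> (\<pi> i) = \<psi> (\<pi> i)" and "\<pi> i \<in> polys"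
      using \<psi>(2) sub by auto
    then show ?thesis
      using ring_hom_on_polys_eval[OF \<psi>(1)] by simp
  qed
  then show "(\<chi> i. \<phi> (\<pi> i)) \<in> range (hilbert_map \<pi>)"
    by (auto simp: hilbert_map_def)
next
  assume "(\<chi> i. \<phi> (\<pi> i)) \<in> range (hilbert_map \<pi>)"
  then obtain x where x: "(\<chi> i. \<phi> (\<pi> i)) = hilbert_map \<pi> x"
    by blast
  have "f x = \<phi> f" if "f \<in> alg_gen (range \<pi>)" for f
    using that ring_hom_on_compose[OF hom] x
    by (auto simp: alg_gen_range_eq_compose_polys hilbert_map_def)
  moreover have "ring_hom_on polys (\<lambda>p. p x)"
    by (simp add: ring_hom_on_def)
  ultimately show "\<exists>\<psi>. ring_hom_on polys \<psi> \<and> (\<forall>f\<in>alg_gen (range \<pi>). \<psi> f = \<phi> f)"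
    by blast
qed

lemma ring_hom_on_dpair_compose:
  fixes \<pi> :: "'m::finite \<Rightarrow> real^'n \<Rightarrow> real"
  assumes hom: "ring_hom_on (alg_gen (range \<pi>)) \<phi>"
    and sub: "alg_gen (range \<pi>) \<subseteq> polys"
    and dpair_gen: "\<And>i j. dpair (\<pi> i) (\<pi> j) \<in> alg_gen (range \<pi>)"
    and g: "g \<in> polys"
  defines "z \<equiv> \<chi> i. \<phi> (\<pi> i)"
  shows "\<phi> (dpair (\<lambda>x. g (hilbert_map \<pi> x)) (\<lambda>x. g (hilbert_map \<pi> x)))
    = grad g z \<bullet> ((\<chi> i j. \<phi> (dpair (\<pi> i) (\<pi> j))) *v grad g z)"
proof -
  define a where "a i = (\<lambda>x. pderiv_fun g i (hilbert_map \<pi> x))" for i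
  have \<pi>_polys: "\<pi> i \<in> polys" for i
    using sub alg_gen.gen[of "\<pi> i" "range \<pi>"] by auto
  have a: "a i \<in> alg_gen (range \<pi>)" "\<phi> (a i) = pderiv_fun g i z" for i
    using alg_gen_compose[of _ \<pi>] ring_hom_on_compose[OF hom] pderiv_fun_polys[OF g]
    by (simp_all add: a_def z_def hilbert_map_def)
  have "dpair (\<lambda>x. g (hilbert_map \<pi> x)) (\<lambda>x. g (hilbert_map \<pi> x))
      = (\<lambda>x. \<Sum>i\<in>UNIV. \<Sum>j\<in>UNIV. a i x * a j x * dpair (\<pi> i) (\<pi> j) x)"
    by (rule ext) (simp add: a_def dpair_compose_hilbert_map[of \<pi> g, OF \<pi>_polys g])
  then have "\<phi> (dpair (\<lambda>x. g (hilbert_map \<pi> x)) (\<lambda>x. g (hilbert_map \<pi> x)))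
      = \<phi> (\<lambda>x. \<Sum>i\<in>UNIV. \<Sum>j\<in>UNIV. a i x * a j x * dpair (\<pi> i) (\<pi> j) x)"
    by simp
  also have "\<dots> = (\<Sum>i\<in>UNIV. \<Sum>j\<in>UNIV. \<phi> (a i) * \<phi> (a j) * \<phi> (dpair (\<pi> i) (\<pi> j)))"
    using a(1) dpair_gen
    by (simp add: ring_hom_on_sum[OF hom] ring_hom_on_mult[OF hom] alg_gen_sum alg_gen.mult)
  also have "\<dots> = grad g z \<bullet> ((\<chi> i j. \<phi> (dpair (\<pi> i) (\<pi> j))) *v grad g z)"
    by (simp add: a(2) grad_nth inner_vec_def matrix_vector_mult_def sum_distrib_left mult_ac)
  finally show ?thesis .
qed

lemma ring_hom_on_dpair_nonneg_iff_psd: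
  fixes \<pi> :: "'m::finite \<Rightarrow> real^'n \<Rightarrow> real"
  assumes hom: "ring_hom_on (alg_gen (range \<pi>)) \<phi>"
    and sub: "alg_gen (range \<pi>) \<subseteq> polys"
    and dpair_gen: "\<And>i j. dpair (\<pi> i) (\<pi> j) \<in> alg_gen (range \<pi>)"
  shows "(\<forall>f\<in>alg_gen (range \<pi>). 0 \<le> \<phi> (dpair f f)) \<longleftrightarrow> psd (\<chi> i j. \<phi> (dpair (\<pi> i) (\<pi> j)))"
proof
  assume nonneg: "\<forall>f\<in>alg_gen (range \<pi>). 0 \<le> \<phi> (dpair f f)"
  show "psd (\<chi> i j. \<phi> (dpair (\<pi> i) (\<pi> j)))"
    unfolding psd_def
  proof
    fix v :: "real^'m"
    have "(\<lambda>x. v \<bullet> hilbert_map \<pi> x) \<in> alg_gen (range \<pi>)"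
      using inner_left_polys by (auto simp: alg_gen_range_eq_compose_polys)
    with nonneg have "0 \<le> \<phi> (dpair (\<lambda>x. v \<bullet> hilbert_map \<pi> x) (\<lambda>x. v \<bullet> hilbert_map \<pi> x))"
      by blast
    then show "0 \<le> v \<bullet> ((\<chi> i j. \<phi> (dpair (\<pi> i) (\<pi> j))) *v v)"
      using ring_hom_on_dpair_compose[OF hom sub dpair_gen inner_left_polys] by (simp add: grad_inner_left)
  qed
next
  assume "psd (\<chi> i j. \<phi> (dpair (\<pi> i) (\<pi> j)))"
  then show "\<forall>f\<in>alg_gen (range \<pi>). 0 \<le> \<phi> (dpair f f)"
    using ring_hom_on_dpair_compose[OF hom sub dpair_gen]
    by (auto simp: alg_gen_range_eq_compose_polys psd_def)
qed

theorem proposition2p7: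
  fixes G :: "(real^'n^'n) set" and \<pi> :: "'m::finite \<Rightarrow> real^'n \<Rightarrow> real"
  assumes "finite_orth_group G"
    and "fundamental_invariants G \<pi>"
  shows "hilbert_map \<pi> ` UNIV =
           {z \<in> real_zero_set (relation_ideal \<pi>).
              psd (\<chi> i j. phi_z \<pi> z (M_Pi \<pi> $ i $ j))}
     \<longleftrightarrow>
     (\<forall>\<phi>. ring_hom_on (inv_polys G) \<phi> \<longrightarrow>
        ((\<exists>\<psi>. ring_hom_on polys \<psi> \<and> (\<forall>f\<in>inv_polys G. \<psi> f = \<phi> f))
         \<longleftrightarrow> (\<forall>f\<in>inv_polys G. \<phi> (dpair f f) \<ge> 0)))"
proof -
  let ?A = "alg_gen (range \<pi>)" and ?V = "real_zero_set (relation_ideal \<pi>)"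
  define S where "S = {z \<in> ?V. psd (\<chi> i j. phi_z \<pi> z (M_Pi \<pi> $ i $ j))}"
  have inv: "inv_polys G = ?A"
    using assms(2) by (simp add: fundamental_invariants_def)
  then have sub: "?A \<subseteq> polys"
    by (auto simp: inv_polys_def)
  have dpair_gen: "dpair (\<pi> i) (\<pi> j) \<in> ?A" for i j
    using assms(1) dpair_inv_polys[of G "\<pi> i" "\<pi> j"] alg_gen.gen[of _ "range \<pi>"]
    by (simp add: inv finite_orth_group_def)
  have "((\<exists>\<psi>. ring_hom_on polys \<psi> \<and> (\<forall>f\<in>?A. \<psi> f = \<phi> f)) \<longleftrightarrow> (\<forall>f\<in>?A. 0 \<le> \<phi> (dpair f f)))
      \<longleftrightarrow> ((\<chi> i. \<phi> (\<pi> i)) \<in> range (hilbert_map \<pi>) \<longleftrightarrow> (\<chi> i. \<phi> (\<pi> i)) \<in> S)"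
    if hom: "ring_hom_on ?A \<phi>" for \<phi>
    using ring_hom_on_extends_iff[OF hom sub] ring_hom_on_dpair_nonneg_iff_psd[OF hom sub dpair_gen]
      ring_hom_on_eq_phi_z[OF hom dpair_gen] ring_hom_on_point_in_zero_set[OF hom]
    by (simp add: S_def M_Pi_def)
  then have "(\<forall>\<phi>. ring_hom_on ?A \<phi> \<longrightarrow>
      ((\<exists>\<psi>. ring_hom_on polys \<psi> \<and> (\<forall>f\<in>?A. \<psi> f = \<phi> f)) \<longleftrightarrow> (\<forall>f\<in>?A. 0 \<le> \<phi> (dpair f f))))
      \<longleftrightarrow> (\<forall>z\<in>?V. z \<in> range (hilbert_map \<pi>) \<longleftrightarrow> z \<in> S)"
    unfolding ring_hom_on_points_eq_zero_set[symmetric] by auto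
  moreover have "range (hilbert_map \<pi>) \<subseteq> ?V" "S \<subseteq> ?V"
    by (auto simp: S_def real_zero_set_def relation_ideal_def)
  ultimately show ?thesis
    unfolding inv S_def[symmetric] by blast
qed

end
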